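(* Let $X$ be a compact metric space with metric $d$. If a continuous map $f\colon X\to X$ satisfies $X=R(f)$ and has the contractive shadowing property, then $X$ is a finite set.
   Context: For $x\in X$, the $\omega$-limit set $\omega(x,f)$ is the set of $y\in X$ such that $f^{i_j}(x)\to y$ for some sequence $0\le i_1<i_2<\cdots$. $R(f)=\{x\in X: x\in\omega(x,f)\}$. For $\delta>0$, a sequence $(x_i)_{i\ge0}$ is a $\delta$-pseudo orbit of $f$ if $d(f(x_i),x_{i+1})\le\delta$ for all $i\ge0$; it is $\epsilon$-shadowed by $x$ if $d(f^i(x),x_i)\le\epsilon$ for all $i\ge0$. $f$ has the contractive shadowing property if there are $0<L<1$ and $\delta_0>0$ such that for every $0<\delta\le\delta_0$, every $\delta$-pseudo orbit of $f$ is $L\delta$-shadowed by some point of $X$. *)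

theory Defs
  imports "HOL-Analysis.Analysis"
begin

definition omega_limit :: "('a::metric_space \<Rightarrow> 'a) \<Rightarrow> 'a \<Rightarrow> 'a set" where
  "omega_limit f x = {y. \<exists>r::nat \<Rightarrow> nat. strict_mono r \<and> (\<lambda>j. (f ^^ r j) x) \<longlonglongrightarrow> y}"

definition recurrent_set :: "'a set \<Rightarrow> ('a::metric_space \<Rightarrow> 'a) \<Rightarrow> 'a set" where
  "recurrent_set X f = {x \<in> X. x \<in> omega_limit f x}"

definition pseudo_orbit :: "'a set \<Rightarrow> ('a::metric_space \<Rightarrow> 'a) \<Rightarrow> real \<Rightarrow> (nat \<Rightarrow> 'a) \<Rightarrow> bool" where
  "pseudo_orbit X f \<delta> xs \<longleftrightarrow> (\<forall>i. xs i \<in> X) \<and> (\<forall>i. dist (f (xs i)) (xs (Suc i)) \<le> \<delta>)"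

definition shadows :: "('a::metric_space \<Rightarrow> 'a) \<Rightarrow> real \<Rightarrow> 'a \<Rightarrow> (nat \<Rightarrow> 'a) \<Rightarrow> bool" where
  "shadows f \<epsilon> x xs \<longleftrightarrow> (\<forall>i. dist ((f ^^ i) x) (xs i) \<le> \<epsilon>)"

definition contractive_shadowing :: "'a set \<Rightarrow> ('a::metric_space \<Rightarrow> 'a) \<Rightarrow> bool" where
  "contractive_shadowing X f \<longleftrightarrow>
     (\<exists>L \<delta>0. 0 < L \<and> L < 1 \<and> 0 < \<delta>0 \<and>
        (\<forall>\<delta>. 0 < \<delta> \<and> \<delta> \<le> \<delta>0 \<longrightarrow>
           (\<forall>xs. pseudo_orbit X f \<delta> xs \<longrightarrow> (\<exists>x\<in>X. shadows f (L * \<delta>) x xs))))"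

end

theory Submission
  imports Defs "HOL-Combinatorics.Orbits"
begin

(* Contractive shadowing can be iterated on a pseudo-orbit with a single jump of size delta:
   shadowing it and splicing the shadowing orbit in replaces that jump by two jumps of size
   L delta, half as far apart.  After k rounds, one more shadowing follows the original
   pseudo-orbit within L^(k+1) delta, except on a window of length 2^k before the jump.
   With 3 L^(k+1) < 1, a minimiser of dist(f^t w, w) + dist(w, x) must be f^t-periodic, so by
   recurrence periodic points are dense.  With L^(k+1) arbitrarily small, gluing the orbit of a
   periodic point q to that of a nearby periodic point p and using the recurrence of the
   shadowing point shows that q lies in the orbit of p.  Hence X meets every small ball in a
   single periodic orbit, and compactness leaves only finitely many points. *)

lemma funpow_mem_invariant:
  assumes "f ` X \<subseteq> X" "x \<in> X"
  shows "(f ^^ n) x \<in> X"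
  using assms by (induction n) auto

lemma continuous_on_funpow:
  assumes "continuous_on X f" "f ` X \<subseteq> X"
  shows "continuous_on X (f ^^ n)"
proof (induction n)
  case 0
  then show ?case by (simp add: continuous_on_id)
next
  case (Suc n)
  have "(f ^^ n) ` X \<subseteq> X"
    using funpow_mem_invariant[OF assms(2)] by blast
  then have "continuous_on ((f ^^ n) ` X) f"
    by (rule continuous_on_subset[OF assms(1)])
  then show ?case
    using continuous_on_compose[OF Suc.IH] by simp
qed

lemma recurrent_set_returns:
  assumes "x \<in> recurrent_set X f" "0 < e"
  shows "\<exists>N\<ge>M. dist ((f ^^ N) x) x < e"
proof -
  obtain r where r: "strict_mono r" "(\<lambda>j. (f ^^ r j) x) \<longlonglongrightarrow> x"
    using assms(1) unfolding recurrent_set_def omega_limit_def by blast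
  then obtain J where "\<forall>j\<ge>J. dist ((f ^^ r j) x) x < e"
    using assms(2) unfolding lim_sequentially by blast
  moreover have "M \<le> r (max J M)"
    using seq_suble[OF r(1), of "max J M"] by simp
  ultimately show ?thesis
    by (intro exI[of _ "r (max J M)"]) auto
qed

definition glued_orbit :: "('a \<Rightarrow> 'a) \<Rightarrow> 'a \<Rightarrow> nat \<Rightarrow> 'a \<Rightarrow> nat \<Rightarrow> 'a" where
  "glued_orbit f a t b i = (if i < t then (f ^^ i) a else (f ^^ (i - t)) b)"

lemma pseudo_orbit_glued_orbit:
  assumes "f ` X \<subseteq> X" "a \<in> X" "b \<in> X" "dist ((f ^^ t) a) b \<le> \<delta>"
  shows "pseudo_orbit X f \<delta> (glued_orbit f a t b)"
  unfolding pseudo_orbit_def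
proof (intro conjI allI)
  fix i
  show "glued_orbit f a t b i \<in> X"
    using assms by (simp add: glued_orbit_def funpow_mem_invariant)
  have "0 \<le> \<delta>"
    using assms(4) zero_le_dist[of "(f ^^ t) a" b] by linarith
  moreover have "f (glued_orbit f a t b i) = glued_orbit f a t b (Suc i)" if "Suc i \<noteq> t"
    using that by (simp add: glued_orbit_def Suc_diff_le)
  moreover have "f (glued_orbit f a t b i) = (f ^^ t) a" "glued_orbit f a t b (Suc i) = b"
    if "Suc i = t"
    using that by (auto simp: glued_orbit_def)
  ultimately show "dist (f (glued_orbit f a t b i)) (glued_orbit f a t b (Suc i)) \<le> \<delta>"
    using assms(4) by (cases "Suc i = t") auto
qed

lemma pseudo_orbit_splice:
  assumes "pseudo_orbit X f \<delta> \<eta>1" "pseudo_orbit X f \<delta> \<eta>2" "\<eta>1 s = \<eta>2 s"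
  shows "pseudo_orbit X f \<delta> (\<lambda>i. if i < s then \<eta>1 i else \<eta>2 i)"
  unfolding pseudo_orbit_def
proof (intro conjI allI)
  fix i
  show "(if i < s then \<eta>1 i else \<eta>2 i) \<in> X"
    using assms(1,2) by (simp add: pseudo_orbit_def)
  have "dist (f (\<eta>1 i)) (\<eta>1 (Suc i)) \<le> \<delta>" "dist (f (\<eta>2 i)) (\<eta>2 (Suc i)) \<le> \<delta>"
    using assms(1,2) by (simp_all add: pseudo_orbit_def)
  then show "dist (f (if i < s then \<eta>1 i else \<eta>2 i))
      (if Suc i < s then \<eta>1 (Suc i) else \<eta>2 (Suc i)) \<le> \<delta>"
    using assms(3) by (cases "Suc i = s") auto
qed

locale contractive_shadowing_on =
  fixes X :: "'a::metric_space set" and f :: "'a \<Rightarrow> 'a" and L \<delta>0 :: real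
  assumes maps_into: "f ` X \<subseteq> X"
    and L_pos: "0 < L" and L_less_1: "L < 1" and \<delta>0_pos: "0 < \<delta>0"
    and shadowing: "\<And>\<delta> \<xi>. 0 < \<delta> \<Longrightarrow> \<delta> \<le> \<delta>0 \<Longrightarrow> pseudo_orbit X f \<delta> \<xi> \<Longrightarrow>
      \<exists>z\<in>X. shadows f (L * \<delta>) z \<xi>"
begin

lemma power_mult_bounds:
  assumes "0 < \<delta>" "\<delta> \<le> \<delta>0"
  shows "0 < L ^ k * \<delta>" "L ^ k * \<delta> \<le> \<delta>0"
proof -
  have "L ^ k \<le> 1"
    using L_pos L_less_1 by (simp add: power_le_one)
  then have "L ^ k * \<delta> \<le> \<delta>"
    using L_pos assms(1) by (intro mult_left_le_one_le) auto
  then show "L ^ k * \<delta> \<le> \<delta>0"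
    using assms(2) by linarith
  show "0 < L ^ k * \<delta>"
    using L_pos assms(1) by simp
qed

lemma glued_orbit_jump_split:
  assumes "0 < \<delta>" "\<delta> \<le> \<delta>0" "a \<in> X" "b \<in> X" "dist ((f ^^ t) a) b \<le> \<delta>"
  shows "\<exists>z\<in>X. (\<forall>s<t. dist ((f ^^ s) a) ((f ^^ s) z) \<le> L * \<delta>) \<and> dist ((f ^^ t) z) b \<le> L * \<delta>"
proof -
  obtain z where "z \<in> X" and z: "\<And>i. dist ((f ^^ i) z) (glued_orbit f a t b i) \<le> L * \<delta>"
    using shadowing[OF assms(1,2) pseudo_orbit_glued_orbit[OF maps_into assms(3-5)]]
    unfolding shadows_def by blast
  have "dist ((f ^^ s) a) ((f ^^ s) z) \<le> L * \<delta>" if "s < t" for s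
    using z[of s] that by (simp add: glued_orbit_def dist_commute)
  moreover have "dist ((f ^^ t) z) b \<le> L * \<delta>"
    using z[of t] by (simp add: glued_orbit_def)
  ultimately show ?thesis
    using \<open>z \<in> X\<close> by blast
qed

lemma glued_orbit_refinement:
  assumes "0 < \<delta>" "\<delta> \<le> \<delta>0" "2 ^ k \<le> t" "a \<in> X" "b \<in> X" "dist ((f ^^ t) a) b \<le> \<delta>"
  shows "\<exists>\<eta>. pseudo_orbit X f (L ^ k * \<delta>) \<eta> \<and>
    (\<forall>i. i \<le> t - 2 ^ k \<or> t \<le> i \<longrightarrow> \<eta> i = glued_orbit f a t b i)"
  using assms
proof (induction k arbitrary: \<delta> t a b)
  case 0
  then show ?case
    using pseudo_orbit_glued_orbit[OF maps_into 0(4-6)] by auto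
next
  case (Suc k)
  define s where "s = t - 2 ^ k"
  have "(0::nat) < 2 ^ k" "2 * 2 ^ k \<le> t"
    using Suc.prems(3) by simp_all
  then have s: "2 ^ k \<le> s" "s < t" "2 ^ k \<le> t" "t - 2 ^ Suc k = s - 2 ^ k"
    unfolding s_def power_Suc by linarith+
  obtain z where "z \<in> X" and jump_s: "dist ((f ^^ s) a) ((f ^^ s) z) \<le> L * \<delta>"
      and jump_t: "dist ((f ^^ t) z) b \<le> L * \<delta>"
    using glued_orbit_jump_split[OF Suc.prems(1,2,4-6)] s(2) by blast
  have L\<delta>: "0 < L * \<delta>" "L * \<delta> \<le> \<delta>0"
    using power_mult_bounds[OF Suc.prems(1,2), of 1] by simp_all
  obtain \<eta>1 where \<eta>1: "pseudo_orbit X f (L ^ k * (L * \<delta>)) \<eta>1"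
      "\<forall>i. i \<le> s - 2 ^ k \<or> s \<le> i \<longrightarrow> \<eta>1 i = glued_orbit f a s ((f ^^ s) z) i"
    using Suc.IH[OF L\<delta> s(1) Suc.prems(4) funpow_mem_invariant[OF maps_into \<open>z \<in> X\<close>] jump_s]
    by blast
  obtain \<eta>2 where \<eta>2: "pseudo_orbit X f (L ^ k * (L * \<delta>)) \<eta>2"
      "\<forall>i. i \<le> t - 2 ^ k \<or> t \<le> i \<longrightarrow> \<eta>2 i = glued_orbit f z t b i"
    using Suc.IH[OF L\<delta> s(3) \<open>z \<in> X\<close> Suc.prems(5) jump_t] by blast
  have "\<eta>1 s = \<eta>2 s"
    using \<eta>1(2) \<eta>2(2) s by (simp add: glued_orbit_def s_def)
  then have "pseudo_orbit X f (L ^ Suc k * \<delta>) (\<lambda>i. if i < s then \<eta>1 i else \<eta>2 i)"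
    using pseudo_orbit_splice[OF \<eta>1(1) \<eta>2(1)] by (simp add: mult.assoc mult.left_commute)
  moreover have "(if i < s then \<eta>1 i else \<eta>2 i) = glued_orbit f a t b i"
    if "i \<le> t - 2 ^ Suc k \<or> t \<le> i" for i
    using that
  proof
    assume "i \<le> t - 2 ^ Suc k"
    then have "i \<le> s - 2 ^ k" "i < s" "i < t"
      using s \<open>0 < 2 ^ k\<close> by linarith+
    then show ?thesis
      using \<eta>1(2) by (simp add: glued_orbit_def)
  next
    assume "t \<le> i"
    then show ?thesis
      using \<eta>2(2) s(2) by (simp add: glued_orbit_def)
  qed
  ultimately show ?case
    by blast
qed

lemma glued_orbit_shadowing:
  assumes "0 < \<delta>" "\<delta> \<le> \<delta>0" "2 ^ k \<le> t" "a \<in> X" "b \<in> X" "dist ((f ^^ t) a) b \<le> \<delta>"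
  shows "\<exists>z\<in>X. dist z a \<le> L ^ Suc k * \<delta> \<and>
    (\<forall>i\<ge>t. dist ((f ^^ i) z) ((f ^^ (i - t)) b) \<le> L ^ Suc k * \<delta>)"
proof -
  obtain \<eta> where \<eta>: "pseudo_orbit X f (L ^ k * \<delta>) \<eta>"
      "\<forall>i. i \<le> t - 2 ^ k \<or> t \<le> i \<longrightarrow> \<eta> i = glued_orbit f a t b i"
    using glued_orbit_refinement[OF assms] by blast
  then obtain z where "z \<in> X" and z: "\<And>i. dist ((f ^^ i) z) (\<eta> i) \<le> L ^ Suc k * \<delta>"
    using shadowing[OF power_mult_bounds[OF assms(1,2), of k]] unfolding shadows_def
    by (fastforce simp: mult.assoc)
  have "(0::nat) < 2 ^ k"
    by simp
  then have "0 < t"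
    using assms(3) by linarith
  then have "\<eta> 0 = a" "\<And>i. t \<le> i \<Longrightarrow> \<eta> i = (f ^^ (i - t)) b"
    using \<eta>(2) by (auto simp: glued_orbit_def)
  then show ?thesis
    using \<open>z \<in> X\<close> z by (metis funpow_0)
qed

lemma periodic_point_near_return:
  assumes "compact X" "continuous_on X f" "3 * L ^ Suc k < 1" "2 ^ k \<le> t" "x \<in> X"
    and return: "dist ((f ^^ t) x) x \<le> \<delta>0"
  shows "\<exists>p\<in>X. (f ^^ t) p = p \<and> dist p x \<le> dist ((f ^^ t) x) x"
proof -
  define \<psi> where "\<psi> w = dist ((f ^^ t) w) w + dist w x" for w
  have "continuous_on X \<psi>"
    unfolding \<psi>_def
    by (intro continuous_intros continuous_on_funpow[OF assms(2) maps_into])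
  then obtain p where pX: "p \<in> X" and p_min: "\<And>y. y \<in> X \<Longrightarrow> \<psi> p \<le> \<psi> y"
    using continuous_attains_inf[OF assms(1)] assms(5) by blast
  have "\<psi> p \<le> dist ((f ^^ t) x) x"
    using p_min[OF assms(5)] by (simp add: \<psi>_def)
  moreover have "(f ^^ t) p = p"
  proof (rule ccontr)
    define e where "e = dist ((f ^^ t) p) p"
    assume "(f ^^ t) p \<noteq> p"
    then have "0 < e"
      by (simp add: e_def)
    moreover have "e \<le> \<delta>0"
      using \<open>\<psi> p \<le> _\<close> return zero_le_dist[of p x] unfolding \<psi>_def e_def by linarith
    moreover have "dist ((f ^^ t) p) p \<le> e"
      by (simp add: e_def)
    ultimately obtain z where "z \<in> X" "dist z p \<le> L ^ Suc k * e"
        and "\<forall>i\<ge>t. dist ((f ^^ i) z) ((f ^^ (i - t)) p) \<le> L ^ Suc k * e"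
      using glued_orbit_shadowing[OF _ _ assms(4) pX pX] by blast
    then have "dist ((f ^^ t) z) p \<le> L ^ Suc k * e"
      by auto
    then have "\<psi> z \<le> 3 * (L ^ Suc k * e) + dist p x"
      using \<open>dist z p \<le> _\<close> dist_triangle[of "(f ^^ t) z" z p] dist_triangle[of z x p]
      by (simp add: \<psi>_def dist_commute)
    also have "\<dots> < e + dist p x"
      using assms(3) \<open>0 < e\<close> by simp
    also have "\<dots> = \<psi> p"
      by (simp add: \<psi>_def e_def)
    finally show False
      using p_min[OF \<open>z \<in> X\<close>] by simp
  qed
  ultimately show ?thesis
    using pX by (intro bexI[of _ p]) (auto simp: \<psi>_def)
qed

(* Since orbit f q consists of the iterates f^n q with n > 0, a point lying in its own orbit
   is exactly a periodic point. *)
lemma periodic_points_dense: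
  assumes "compact X" "continuous_on X f" "y \<in> recurrent_set X f" "0 < e"
  shows "\<exists>q\<in>X. q \<in> orbit f q \<and> dist q y < e"
proof -
  obtain k where "L ^ k < 1 / 3"
    using real_arch_pow_inv[of "1 / 3" L] L_less_1 by auto
  moreover have "L ^ Suc k \<le> L ^ k"
    using L_pos L_less_1 by (intro power_decreasing) auto
  ultimately have contraction: "3 * L ^ Suc k < 1"
    by linarith
  have "0 < min e \<delta>0"
    using assms(4) \<delta>0_pos by simp
  then obtain N where N: "2 ^ k \<le> N" "dist ((f ^^ N) y) y < min e \<delta>0"
    using recurrent_set_returns[OF assms(3)] by blast
  have "y \<in> X"
    using assms(3) by (simp add: recurrent_set_def)
  moreover have "dist ((f ^^ N) y) y \<le> \<delta>0"
    using N(2) by simp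
  ultimately obtain q where q: "q \<in> X" "(f ^^ N) q = q" "dist q y \<le> dist ((f ^^ N) y) y"
    using periodic_point_near_return[OF assms(1,2) contraction N(1)] by blast
  have "(0::nat) < 2 ^ k"
    by simp
  then have "0 < N"
    using N(1) by linarith
  then have "q \<in> orbit f q"
    unfolding orbit_altdef using q(2) by (intro CollectI exI[of _ N]) simp
  moreover have "dist q y < e"
    using q(3) N(2) by simp
  ultimately show ?thesis
    using q(1) by blast
qed

lemma periodic_point_approached_by_nearby_orbit:
  assumes recurrent: "X \<subseteq> recurrent_set X f"
    and "p \<in> X" "q \<in> X" "p \<in> orbit f p" "q \<in> orbit f q" "dist q p \<le> \<delta>0" "0 < \<epsilon>"
  shows "\<exists>y\<in>orbit f p. dist y q < \<epsilon>"
proof -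
  obtain n where n: "L ^ n < \<epsilon> / (4 * \<delta>0)"
    using real_arch_pow_inv[of "\<epsilon> / (4 * \<delta>0)" L] assms(7) \<delta>0_pos L_less_1 by auto
  obtain m where m: "0 < m" "(f ^^ m) q = q"
    using assms(5) by (auto simp: orbit_altdef)
  define t where "t = m * 2 ^ n"
  have "(f ^^ t) q = q"
    using funpow_mod_eq[OF m(2), of t] by (simp add: t_def)
  then have "dist ((f ^^ t) q) p \<le> \<delta>0"
    using assms(6) by simp
  moreover have "2 ^ n \<le> t"
    using m(1) by (simp add: t_def)
  ultimately obtain z where "z \<in> X" and z0: "dist z q \<le> L ^ Suc n * \<delta>0"
      and zt: "\<forall>i\<ge>t. dist ((f ^^ i) z) ((f ^^ (i - t)) p) \<le> L ^ Suc n * \<delta>0"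
    using glued_orbit_shadowing[OF \<delta>0_pos order_refl _ assms(3,2)] by blast
  have "L ^ n * \<delta>0 < \<epsilon> / 4"
    using n \<delta>0_pos by (simp add: field_simps)
  moreover have "L ^ Suc n * \<delta>0 \<le> L ^ n * \<delta>0"
    using L_pos L_less_1 \<delta>0_pos by (intro mult_right_mono power_decreasing) auto
  moreover obtain N where "t \<le> N" "dist ((f ^^ N) z) z < \<epsilon> / 2"
    using recurrent_set_returns[of z X f "\<epsilon> / 2" t] recurrent \<open>z \<in> X\<close> assms(7) by auto
  moreover have "dist ((f ^^ (N - t)) p) ((f ^^ N) z) \<le> L ^ Suc n * \<delta>0"
    using zt \<open>t \<le> N\<close> by (simp add: dist_commute)
  ultimately have "dist ((f ^^ (N - t)) p) q < \<epsilon>"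
    using z0 dist_triangle[of "(f ^^ (N - t)) p" q z]
      dist_triangle[of "(f ^^ (N - t)) p" z "(f ^^ N) z"]
    by linarith
  moreover have "(f ^^ (N - t)) p \<in> orbit f p"
    using assms(4) by (rule funpow_in_orbit)
  ultimately show ?thesis
    by blast
qed

lemma periodic_point_in_nearby_orbit:
  assumes "X \<subseteq> recurrent_set X f"
    and "p \<in> X" "q \<in> X" "p \<in> orbit f p" "q \<in> orbit f q" "dist q p \<le> \<delta>0"
  shows "q \<in> orbit f p"
proof -
  have "q \<in> closure (orbit f p)"
    using periodic_point_approached_by_nearby_orbit[OF assms] unfolding closure_approachable by blast
  moreover have "closed (orbit f p)"
    using finite_orbit[OF assms(4)] by (rule finite_imp_closed)
  ultimately show ?thesis
    by simp
qed

lemma finite_inter_ball: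
  assumes "compact X" "continuous_on X f" "X \<subseteq> recurrent_set X f" "x \<in> X"
  shows "finite (X \<inter> ball x (\<delta>0 / 2))"
proof -
  have "x \<in> recurrent_set X f" "0 < \<delta>0 / 2"
    using assms(3,4) \<delta>0_pos by auto
  then obtain p where "p \<in> X" "p \<in> orbit f p" and px: "dist p x < \<delta>0 / 2"
    using periodic_points_dense[OF assms(1,2)] by blast
  have "y \<in> closure (orbit f p)" if y: "y \<in> X" "dist x y < \<delta>0 / 2" for y
    unfolding closure_approachable
  proof (intro allI impI)
    fix \<epsilon> :: real
    assume "0 < \<epsilon>"
    moreover have "y \<in> recurrent_set X f"
      using assms(3) y(1) by blast
    ultimately obtain q where "q \<in> X" "q \<in> orbit f q"
      and qy: "dist q y < min \<epsilon> (\<delta>0 / 2 - dist x y)"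
      using periodic_points_dense[OF assms(1,2)] y(2) by (metis diff_gt_0_iff_gt min_less_iff_conj)
    then have "dist q p \<le> \<delta>0"
      using dist_triangle[of q p y] dist_triangle[of y p x] px by (simp add: dist_commute)
    then have "q \<in> orbit f p"
      by (rule periodic_point_in_nearby_orbit[OF assms(3) \<open>p \<in> X\<close> \<open>q \<in> X\<close> \<open>p \<in> orbit f p\<close> \<open>q \<in> orbit f q\<close>])
    then show "\<exists>q\<in>orbit f p. dist q y < \<epsilon>"
      using qy by auto
  qed
  moreover have "closed (orbit f p)"
    using finite_orbit[OF \<open>p \<in> orbit f p\<close>] by (rule finite_imp_closed)
  ultimately have "X \<inter> ball x (\<delta>0 / 2) \<subseteq> orbit f p"
    by auto
  then show ?thesis
    using finite_orbit[OF \<open>p \<in> orbit f p\<close>] by (rule finite_subset)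
qed

end

theorem lemma2p1:
  fixes X :: "'a::metric_space set" and f :: "'a \<Rightarrow> 'a"
  assumes "compact X"
    and "continuous_on X f" and "f ` X \<subseteq> X"
    and "X = recurrent_set X f"
    and "contractive_shadowing X f"
  shows "finite X"
proof -
  obtain L \<delta>0 where "contractive_shadowing_on X f L \<delta>0"
    using assms(3,5) unfolding contractive_shadowing_def contractive_shadowing_on_def by blast
  then interpret contractive_shadowing_on X f L \<delta>0 .
  have "X \<subseteq> (\<Union>x\<in>X. ball x (\<delta>0 / 2))"
    using \<delta>0_pos by auto
  then obtain C where "C \<subseteq> X" "finite C" "X \<subseteq> (\<Union>x\<in>C. ball x (\<delta>0 / 2))"
    by (rule compactE_image[OF assms(1) open_ball])
  then have "X = (\<Union>x\<in>C. X \<inter> ball x (\<delta>0 / 2))"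
    by blast
  moreover have "finite (X \<inter> ball x (\<delta>0 / 2))" if "x \<in> C" for x
    using finite_inter_ball[OF assms(1,2)] assms(4) \<open>C \<subseteq> X\<close> that by blast
  ultimately show ?thesis
    using \<open>finite C\<close> by (metis finite_UN_I)
qed

end
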